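(* For every $u\in K$, $$\overline V=W:=\{v\in X:\ (Bv)(x)\ge0 \text{ for all } x\in\omega_c\},$$ where the closure of $V$ is taken in $X$.
   Context: Fix $T>1$. $X=H^1_0(0,T)$, $U=\{1+v:v\in X\}$, $(Bw)(x)=\int_x^{x+1}w$ for $x\in[0,T-1]$, $K=\{u\in U: Bu\ge0 \text{ on }[0,T-1]\}$, $\omega_c=\{x\in[0,T-1]:(Bu)(x)=0\}$. For fixed $u$, $V=\{v\in X:\ \exists(\varepsilon_n)\subset(0,\infty),\ \varepsilon_n\to0,\ B(u+\varepsilon_nv)\ge0 \text{ on }[0,T-1]\ \forall n\}$. *)

theory Defs
  imports "HOL-Analysis.Analysis"
begin

text \<open>Elements of H^1_0(0,T) are represented by their continuous representative,
  a function real => real, extended by 0 outside [0,T].  The function g is an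
  L^2 weak derivative of v on [0,T].\<close>

definition weak_deriv_L2 :: "real \<Rightarrow> (real \<Rightarrow> real) \<Rightarrow> (real \<Rightarrow> real) \<Rightarrow> bool" where
  "weak_deriv_L2 T v g \<longleftrightarrow>
     g \<in> borel_measurable lborel \<and>
     set_integrable lborel {0..T} (\<lambda>t. (g t)^2) \<and>
     (\<forall>x\<in>{0..T}. v x = v 0 + (LINT t:{0..x}|lborel. g t))"

definition H10 :: "real \<Rightarrow> (real \<Rightarrow> real) set" where
  "H10 T = {v. (\<forall>x. x \<notin> {0..T} \<longrightarrow> v x = 0) \<and> v 0 = 0 \<and> v T = 0 \<and>
                (\<exists>g. weak_deriv_L2 T v g)}"

definition h1_norm_sq :: "real \<Rightarrow> (real \<Rightarrow> real) \<Rightarrow> (real \<Rightarrow> real) \<Rightarrow> real" where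
  "h1_norm_sq T v g = (LINT t:{0..T}|lborel. (v t)^2) + (LINT t:{0..T}|lborel. (g t)^2)"

definition H10_closure :: "real \<Rightarrow> (real \<Rightarrow> real) set \<Rightarrow> (real \<Rightarrow> real) set" where
  "H10_closure T S = {v \<in> H10 T. \<forall>e>0. \<exists>w\<in>S. \<exists>g.
      weak_deriv_L2 T (\<lambda>t. v t - w t) g \<and> h1_norm_sq T (\<lambda>t. v t - w t) g < e^2}"

definition Uset :: "real \<Rightarrow> (real \<Rightarrow> real) set" where
  "Uset T = {u. \<exists>v\<in>H10 T. u = (\<lambda>x. 1 + v x)}"

definition Bop :: "(real \<Rightarrow> real) \<Rightarrow> real \<Rightarrow> real" where
  "Bop w x = (LINT t:{x..x+1}|lborel. w t)"

definition Kset :: "real \<Rightarrow> (real \<Rightarrow> real) set" where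
  "Kset T = {u \<in> Uset T. \<forall>x\<in>{0..T-1}. Bop u x \<ge> 0}"

definition omega_c :: "real \<Rightarrow> (real \<Rightarrow> real) \<Rightarrow> real set" where
  "omega_c T u = {x \<in> {0..T-1}. Bop u x = 0}"

definition Vset :: "real \<Rightarrow> (real \<Rightarrow> real) \<Rightarrow> (real \<Rightarrow> real) set" where
  "Vset T u = {v \<in> H10 T. \<exists>\<epsilon>::nat \<Rightarrow> real. (\<forall>n. \<epsilon> n > 0) \<and> \<epsilon> \<longlonglongrightarrow> 0 \<and>
      (\<forall>n. \<forall>x\<in>{0..T-1}. Bop (\<lambda>t. u t + \<epsilon> n * v t) x \<ge> 0)}"

definition Wset :: "real \<Rightarrow> (real \<Rightarrow> real) \<Rightarrow> (real \<Rightarrow> real) set" where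
  "Wset T u = {v \<in> H10 T. \<forall>x\<in>omega_c T u. Bop v x \<ge> 0}"

end

theory Submission
  imports Defs
begin

text \<open>
  If \<open>v \<in> V\<close> and \<open>Bu(x) = 0\<close>, then \<open>\<epsilon> Bv(x) = B(u + \<epsilon>v)(x) \<ge> 0\<close>, so \<open>V \<subseteq> W\<close>.
  The set \<open>W\<close> is closed in \<open>X\<close> because \<open>|Bv(x)|\<close> is controlled by the \<open>L\<^sup>2\<close> norm
  of \<open>v\<close>; hence \<open>closure V \<subseteq> W\<close>.
  Conversely, for \<open>v \<in> W\<close> and \<open>\<delta> > 0\<close> put \<open>w = v - \<delta>(u - 1)\<close>. Then
  \<open>Bw = Bv + \<delta> - \<delta> Bu > 0\<close> on \<open>\<omega>\<^sub>c\<close>, so by continuity and compactness of \<open>[0,T-1]\<close>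
  we get \<open>Bu + \<epsilon> Bw \<ge> 0\<close> for all small \<open>\<epsilon> > 0\<close>, i.e. \<open>w \<in> V\<close>; and
  \<open>\<parallel>v - w\<parallel> = \<delta> \<parallel>u - 1\<parallel>\<close> tends to \<open>0\<close> with \<open>\<delta>\<close>.
\<close>

lemma square_integrable_imp_set_integrable:
  fixes g :: "real \<Rightarrow> real"
  assumes "g \<in> borel_measurable lborel" "set_integrable lborel {a..b} (\<lambda>t. (g t)^2)"
  shows "set_integrable lborel {a..b} g"
proof (rule set_integrable_bound[where f="\<lambda>t. 1 + (g t)^2"])
  have "set_integrable lborel {a..b} (\<lambda>t. 1::real)"
    by (rule borel_integrable_atLeastAtMost') simp
  then show "set_integrable lborel {a..b} (\<lambda>t. 1 + (g t)^2)"
    using assms(2) by (rule set_integral_add)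
  show "set_borel_measurable lborel {a..b} g"
    unfolding set_borel_measurable_def using assms(1) by measurable
  have "\<bar>y\<bar> \<le> 1 + y^2" for y :: real
  proof (cases "\<bar>y\<bar> \<le> 1")
    case False
    then have "\<bar>y\<bar> * 1 \<le> \<bar>y\<bar> * \<bar>y\<bar>" by (intro mult_left_mono) auto
    then show ?thesis by (simp add: power2_eq_square abs_mult_self_eq)
  qed (simp add: add_increasing2)
  then show "AE x in lborel. x \<in> {a..b} \<longrightarrow> norm (g x) \<le> norm (1 + (g x)^2)"
    by auto
qed

lemma weak_deriv_L2_set_integrable:
  assumes "weak_deriv_L2 T v g" "x \<in> {0..T}"
  shows "set_integrable lborel {0..x} g"
proof -
  have "set_integrable lborel {0..T} g"
    using assms(1) square_integrable_imp_set_integrable unfolding weak_deriv_L2_def by blast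
  then show ?thesis by (rule set_integrable_subset) (use assms(2) in auto)
qed

lemma weak_deriv_L2_lincomb:
  assumes a: "weak_deriv_L2 T a ga" and b: "weak_deriv_L2 T b gb"
  shows "weak_deriv_L2 T (\<lambda>t. a t + c * b t) (\<lambda>t. ga t + c * gb t)"
  unfolding weak_deriv_L2_def
proof (intro conjI ballI)
  have "ga \<in> borel_measurable lborel" "gb \<in> borel_measurable lborel"
    using a b unfolding weak_deriv_L2_def by auto
  then show m: "(\<lambda>t. ga t + c * gb t) \<in> borel_measurable lborel"
    by simp
  have "set_integrable lborel {0..T} (\<lambda>t. 2 * (ga t)^2 + 2 * c^2 * (gb t)^2)"
    using a b unfolding weak_deriv_L2_def
    by (intro set_integral_add(1) set_integrable_mult_right) auto
  then show "set_integrable lborel {0..T} (\<lambda>t. (ga t + c * gb t)^2)"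
  proof (rule set_integrable_bound)
    show "set_borel_measurable lborel {0..T} (\<lambda>t. (ga t + c * gb t)^2)"
      unfolding set_borel_measurable_def using m by simp
    have "(y + c * z)^2 \<le> 2 * y^2 + 2 * c^2 * z^2" for y z :: real
      using zero_le_power2[of "y - c * z"] by (simp add: power2_eq_square algebra_simps)
    then show "AE t in lborel. t \<in> {0..T} \<longrightarrow>
        norm ((ga t + c * gb t)^2) \<le> norm (2 * (ga t)^2 + 2 * c^2 * (gb t)^2)"
      by (simp add: add_nonneg_nonneg)
  qed
  fix x assume x: "x \<in> {0..T}"
  have "(LINT t:{0..x}|lborel. ga t + c * gb t)
      = (LINT t:{0..x}|lborel. ga t) + c * (LINT t:{0..x}|lborel. gb t)"
  proof -
    have "set_integrable lborel {0..x} (\<lambda>t. c * gb t)"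
      using weak_deriv_L2_set_integrable[OF b x] by (rule set_integrable_mult_right)
    then show ?thesis
      using weak_deriv_L2_set_integrable[OF a x]
      by (simp only: set_integral_add(2) set_integral_mult_right)
  qed
  moreover have "a x = a 0 + (LINT t:{0..x}|lborel. ga t)" "b x = b 0 + (LINT t:{0..x}|lborel. gb t)"
    using a b x unfolding weak_deriv_L2_def by blast+
  ultimately show "a x + c * b x = a 0 + c * b 0 + (LINT t:{0..x}|lborel. ga t + c * gb t)"
    by (simp only: distrib_left)
qed

lemma weak_deriv_L2_scale:
  assumes "weak_deriv_L2 T v g"
  shows "weak_deriv_L2 T (\<lambda>t. c * v t) (\<lambda>t. c * g t)"
proof -
  have "weak_deriv_L2 T (\<lambda>t. 0) (\<lambda>t. 0)"
    unfolding weak_deriv_L2_def by (simp add: set_integrable_def)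
  from weak_deriv_L2_lincomb[OF this assms, of c] show ?thesis by simp
qed

lemma H10_lincomb:
  assumes "a \<in> H10 T" "b \<in> H10 T"
  shows "(\<lambda>t. a t + c * b t) \<in> H10 T"
proof -
  obtain ga gb where "weak_deriv_L2 T a ga" "weak_deriv_L2 T b gb"
    using assms unfolding H10_def by auto
  then have "weak_deriv_L2 T (\<lambda>t. a t + c * b t) (\<lambda>t. ga t + c * gb t)"
    by (rule weak_deriv_L2_lincomb)
  then show ?thesis using assms unfolding H10_def by auto
qed

lemma H10_continuous:
  assumes "v \<in> H10 T" "T \<ge> 0"
  shows "continuous_on UNIV v"
proof -
  obtain g where g: "weak_deriv_L2 T v g"
    and v0: "\<forall>x. x \<notin> {0..T} \<longrightarrow> v x = 0" "v 0 = 0" "v T = 0"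
    using assms(1) unfolding H10_def by auto
  have "set_integrable lborel {0..T} g"
    using weak_deriv_L2_set_integrable[OF g, of T] assms(2) by simp
  then have "g integrable_on {0..T}"
    by (rule set_borel_integral_eq_integral)
  then have "continuous_on {0..T} (\<lambda>x. integral {0..x} g)"
    by (rule indefinite_integral_continuous_1)
  moreover have "integral {0..x} g = v x" if "x \<in> {0..T}" for x
  proof -
    have "(LINT t:{0..x}|lborel. g t) = integral {0..x} g"
      using weak_deriv_L2_set_integrable[OF g that] by (rule set_borel_integral_eq_integral)
    then show ?thesis
      using g that v0 unfolding weak_deriv_L2_def by auto
  qed
  ultimately have on_support: "continuous_on {0..T} v"
    by (rule continuous_on_eq) auto
  have "continuous_on {..0} v"
    by (rule continuous_on_eq[OF continuous_on_const[of _ 0]])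
      (use v0 in \<open>metis atLeastAtMost_iff atMost_iff order_antisym_conv\<close>)
  moreover have "continuous_on {T..} v"
    by (rule continuous_on_eq[OF continuous_on_const[of _ 0]])
      (use v0 in \<open>metis atLeastAtMost_iff atLeast_iff order_antisym_conv\<close>)
  ultimately have "continuous_on ({..0} \<union> {0..T} \<union> {T..}) v"
    using on_support by (intro continuous_on_closed_Un) auto
  moreover have "{..0} \<union> {0..T} \<union> {T..} = (UNIV::real set)"
    using assms(2) by auto
  ultimately show ?thesis
    by metis
qed

lemma Uset_continuous:
  assumes "u \<in> Uset T" "T \<ge> 0"
  shows "continuous_on UNIV u"
proof -
  obtain v where v: "v \<in> H10 T" and u: "u = (\<lambda>x. 1 + v x)"
    using assms(1) unfolding Uset_def by blast
  have "continuous_on UNIV v"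
    using v assms(2) by (rule H10_continuous)
  then show ?thesis
    unfolding u by (intro continuous_intros)
qed

lemma set_integral_square_nonneg: "0 \<le> (LINT t:A|lborel. ((g t)::real)^2)"
  unfolding set_lebesgue_integral_def
  by (intro Bochner_Integration.integral_nonneg) (simp add: indicator_def)

lemma h1_norm_sq_nonneg: "0 \<le> h1_norm_sq T v g"
  unfolding h1_norm_sq_def by (intro add_nonneg_nonneg set_integral_square_nonneg)

lemma h1_norm_sq_scale:
  "h1_norm_sq T (\<lambda>t. c * v t) (\<lambda>t. c * g t) = c^2 * h1_norm_sq T v g"
  unfolding h1_norm_sq_def power_mult_distrib set_integral_mult_right
  by (simp only: distrib_left)

lemma H10_closure_mono: "S \<subseteq> S' \<Longrightarrow> H10_closure T S \<subseteq> H10_closure T S'"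
  unfolding H10_closure_def by blast

lemma set_integral_continuous_eq_integral:
  fixes f :: "real \<Rightarrow> real"
  assumes "continuous_on UNIV f"
  shows "(LINT t:{a..b}|lborel. f t) = integral {a..b} f"
  by (rule set_borel_integral_eq_integral(2), rule borel_integrable_atLeastAtMost')
     (rule continuous_on_subset[OF assms], simp)

lemma continuous_integrable_on_interval:
  fixes f :: "real \<Rightarrow> real"
  shows "continuous_on UNIV f \<Longrightarrow> f integrable_on {a..b}"
  by (rule integrable_continuous_interval, erule continuous_on_subset) simp

lemma Bop_eq_integral:
  "continuous_on UNIV f \<Longrightarrow> Bop f x = integral {x..x+1} f"
  unfolding Bop_def by (rule set_integral_continuous_eq_integral)

lemma Bop_lincomb:
  assumes "continuous_on UNIV a" "continuous_on UNIV b"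
  shows "Bop (\<lambda>t. a t + c * b t) x = Bop a x + c * Bop b x"
proof -
  have "continuous_on UNIV (\<lambda>t. a t + c * b t)" "continuous_on UNIV (\<lambda>t. c * b t)"
    using assms by (auto intro!: continuous_intros)
  with assms show ?thesis
    by (simp add: Bop_eq_integral integral_add continuous_integrable_on_interval)
qed

lemma Bop_one_plus:
  "continuous_on UNIV v \<Longrightarrow> Bop (\<lambda>t. 1 + v t) x = 1 + Bop v x"
  using Bop_lincomb[of "\<lambda>_. 1" v 1 x] by (simp add: Bop_eq_integral)

lemma Bop_continuous_on:
  assumes f: "continuous_on UNIV f"
  shows "continuous_on {0..T-1} (Bop f)"
proof -
  define F where "F x = integral {0..x} f" for x
  have F: "continuous_on {0..T} F"
    unfolding F_def
    by (rule indefinite_integral_continuous_1[OF continuous_integrable_on_interval[OF f]])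
  have "continuous_on {0..T-1} (\<lambda>x. F (x + 1) - F x)"
    by (intro continuous_intros continuous_on_compose2[OF F] continuous_on_subset[OF F]) auto
  moreover have "F (x + 1) - F x = Bop f x" if "x \<in> {0..T-1}" for x
    using Henstock_Kurzweil_Integration.integral_combine[of 0 x "x+1" f] that
      continuous_integrable_on_interval[OF f] Bop_eq_integral[OF f]
    unfolding F_def by auto
  ultimately show ?thesis by (rule continuous_on_eq)
qed

text \<open>The pointwise AM-GM bound \<open>-e/2 - y\<^sup>2/(2e) \<le> y\<close>, integrated over \<open>[x, x+1]\<close>,
  replaces Cauchy-Schwarz.\<close>

lemma Bop_gt_neg_if_L2_sq_less:
  assumes d: "continuous_on UNIV d" and x: "0 \<le> x" "x + 1 \<le> T" and e: "e > 0"
    and L2: "(LINT t:{0..T}|lborel. (d t)^2) < e^2"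
  shows "Bop d x > -e"
proof -
  have d2: "continuous_on UNIV (\<lambda>t. (d t)^2)"
    using d by (intro continuous_intros)
  have "-(e/2) - y^2/(2*e) \<le> y" for y
  proof -
    have "0 \<le> (y + e)^2/(2*e)" using e by simp
    also have "\<dots> = y^2/(2*e) + y + e/2"
      using e by (simp add: field_simps power2_eq_square)
    finally show ?thesis by linarith
  qed
  then have "integral {x..x+1} (\<lambda>t. -(e/2) - (d t)^2/(2*e)) \<le> integral {x..x+1} d"
    using d d2 e by (intro integral_le) (auto intro!: continuous_integrable_on_interval continuous_intros)
  also have "integral {x..x+1} (\<lambda>t. -(e/2) - (d t)^2/(2*e))
      = -(e/2) - integral {x..x+1} (\<lambda>t. (d t)^2) / (2*e)"
    using d2 e by (subst integral_diff) (auto intro!: continuous_integrable_on_interval continuous_intros)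
  finally have "-(e/2) - integral {x..x+1} (\<lambda>t. (d t)^2) / (2*e) \<le> Bop d x"
    using Bop_eq_integral[OF d] by simp
  moreover have "integral {x..x+1} (\<lambda>t. (d t)^2) / (2*e) < e^2 / (2*e)"
  proof (rule divide_strict_right_mono)
    have "integral {x..x+1} (\<lambda>t. (d t)^2) \<le> integral {0..T} (\<lambda>t. (d t)^2)"
      using x continuous_integrable_on_interval[OF d2] by (intro integral_subset_le) auto
    then show "integral {x..x+1} (\<lambda>t. (d t)^2) < e^2"
      using L2 set_integral_continuous_eq_integral[OF d2] by simp
  qed (use e in simp)
  moreover have "e^2 / (2*e) = e/2"
    using e by (simp add: power2_eq_square)
  ultimately show ?thesis by linarith
qed

lemma eventually_nonneg_perturbation:
  fixes f p :: "'a::t2_space \<Rightarrow> real"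
  assumes S: "compact S" and f: "continuous_on S f" and p: "continuous_on S p"
    and f_nonneg: "\<forall>x\<in>S. 0 \<le> f x" and p_pos: "\<forall>x\<in>S. f x = 0 \<longrightarrow> 0 < p x"
  shows "\<forall>\<^sub>F \<epsilon> in at_right 0. \<forall>x\<in>S. 0 \<le> f x + \<epsilon> * p x"
proof -
  define C where "C = {x\<in>S. p x \<le> 0}"
  have "closed C"
    unfolding C_def
    using continuous_on_closed_Collect_le[OF p continuous_on_const compact_imp_closed[OF S]] .
  moreover have "C = S \<inter> C"
    unfolding C_def by blast
  ultimately have "compact C"
    using compact_Int_closed[OF S] by metis
  have "C \<subseteq> S"
    unfolding C_def by blast
  obtain m where m: "m > 0" "\<forall>x\<in>C. m \<le> f x"
  proof (cases "C = {}")
    case False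
    then obtain x0 where "x0 \<in> C" "\<forall>y\<in>C. f x0 \<le> f y"
      using continuous_attains_inf[OF \<open>compact C\<close> False continuous_on_subset[OF f \<open>C \<subseteq> S\<close>]]
      by blast
    moreover have "f x0 > 0"
      using \<open>x0 \<in> C\<close> f_nonneg p_pos unfolding C_def by force
    ultimately show ?thesis using that by blast
  qed (use that[of 1] in simp)
  obtain M where M: "\<forall>x\<in>S. \<bar>p x\<bar> \<le> M"
    using compact_imp_bounded[OF compact_continuous_image[OF p S]]
    unfolding bounded_real by auto
  have "0 \<le> f x + \<epsilon> * p x" if \<epsilon>: "0 < \<epsilon>" "\<epsilon> < m / (\<bar>M\<bar> + 1)" and x: "x \<in> S" for \<epsilon> x
  proof (cases "x \<in> C")
    case True
    have "\<epsilon> * \<bar>p x\<bar> \<le> m / (\<bar>M\<bar> + 1) * \<bar>M\<bar>"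
      using \<epsilon> M x by (intro mult_mono) auto
    also have "\<dots> \<le> m"
      using m by (simp add: field_simps)
    moreover have "- (\<epsilon> * \<bar>p x\<bar>) \<le> \<epsilon> * p x"
      using \<epsilon> by (simp add: abs_if)
    moreover have "m \<le> f x"
      using True m(2) by blast
    ultimately show ?thesis
      by linarith
  next
    case False
    then show ?thesis using x \<epsilon> f_nonneg unfolding C_def by simp
  qed
  moreover have "m / (\<bar>M\<bar> + 1) > 0" using m by simp
  ultimately show ?thesis
    unfolding eventually_at_right_field by blast
qed

lemma eventually_at_right_0_imp_null_sequence:
  assumes "\<forall>\<^sub>F \<epsilon> in at_right (0::real). P \<epsilon>"
  obtains \<epsilon> :: "nat \<Rightarrow> real" where "\<forall>n. 0 < \<epsilon> n" "\<epsilon> \<longlonglongrightarrow> 0" "\<forall>n. P (\<epsilon> n)"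
proof -
  obtain b where b: "b > 0" "\<forall>y>0. y < b \<longrightarrow> P y"
    using assms unfolding eventually_at_right_field by auto
  define \<epsilon> where "\<epsilon> n = b / 2 * inverse (real (Suc n))" for n
  have "\<forall>n. 0 < \<epsilon> n"
    using b by (simp add: \<epsilon>_def)
  moreover have "\<epsilon> n < b" for n
  proof -
    have "inverse (real (Suc n)) \<le> 1"
      by (rule inverse_le_1_iff[THEN iffD2]) simp
    then have "\<epsilon> n \<le> b / 2"
      unfolding \<epsilon>_def using b by (intro mult_left_le) auto
    then show ?thesis using b by linarith
  qed
  moreover have "\<epsilon> \<longlonglongrightarrow> 0"
    unfolding \<epsilon>_def by (rule tendsto_mult_right_zero[OF LIMSEQ_inverse_real_of_nat])
  ultimately show ?thesis using that b by blast
qed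

lemma Vset_memI:
  assumes "w \<in> H10 T"
    and "\<forall>\<^sub>F \<epsilon> in at_right 0. \<forall>x\<in>{0..T-1}. 0 \<le> Bop (\<lambda>t. u t + \<epsilon> * w t) x"
  shows "w \<in> Vset T u"
proof -
  obtain \<epsilon> :: "nat \<Rightarrow> real" where "\<forall>n. 0 < \<epsilon> n" "\<epsilon> \<longlonglongrightarrow> 0"
    "\<forall>n. \<forall>x\<in>{0..T-1}. 0 \<le> Bop (\<lambda>t. u t + \<epsilon> n * w t) x"
    by (rule eventually_at_right_0_imp_null_sequence[OF assms(2)])
  with assms(1) show ?thesis
    unfolding Vset_def by blast
qed

lemma Vset_subset_Wset:
  assumes "T \<ge> 0" "u \<in> Uset T"
  shows "Vset T u \<subseteq> Wset T u"
proof
  fix v assume v: "v \<in> Vset T u"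
  then obtain \<epsilon> :: "nat \<Rightarrow> real" where \<epsilon>: "0 < \<epsilon> 0"
    and nonneg: "\<forall>x\<in>{0..T-1}. 0 \<le> Bop (\<lambda>t. u t + \<epsilon> 0 * v t) x"
    unfolding Vset_def by blast
  have cu: "continuous_on UNIV u"
    using assms by (intro Uset_continuous)
  have vH: "v \<in> H10 T"
    using v unfolding Vset_def by simp
  have "0 \<le> Bop v x" if "x \<in> omega_c T u" for x
  proof -
    have x: "x \<in> {0..T-1}" "Bop u x = 0"
      using that unfolding omega_c_def by auto
    have "Bop (\<lambda>t. u t + \<epsilon> 0 * v t) x = \<epsilon> 0 * Bop v x"
      using x(2) Bop_lincomb[OF cu H10_continuous[OF vH assms(1)]] by simp
    then have "0 \<le> \<epsilon> 0 * Bop v x"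
      using nonneg[rule_format, OF x(1)] by simp
    then show ?thesis
      using \<epsilon> by (simp add: zero_le_mult_iff)
  qed
  with vH show "v \<in> Wset T u"
    unfolding Wset_def by blast
qed

lemma H10_closure_Bop_nonneg:
  assumes T: "T \<ge> 0" and A: "A \<subseteq> {0..T-1}"
  shows "H10_closure T {v \<in> H10 T. \<forall>x\<in>A. 0 \<le> Bop v x} \<subseteq> {v \<in> H10 T. \<forall>x\<in>A. 0 \<le> Bop v x}"
proof
  fix v assume v: "v \<in> H10_closure T {v \<in> H10 T. \<forall>x\<in>A. 0 \<le> Bop v x}"
  then have vH: "v \<in> H10 T" unfolding H10_closure_def by auto
  have "0 \<le> Bop v x" if x: "x \<in> A" for x
  proof (rule ccontr)
    assume "\<not> 0 \<le> Bop v x"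
    then have e: "- Bop v x > 0" by simp
    with v obtain w g where w: "w \<in> H10 T" "0 \<le> Bop w x"
      and close: "h1_norm_sq T (\<lambda>t. v t - w t) g < (- Bop v x)^2"
      using x unfolding H10_closure_def by blast
    have cv: "continuous_on UNIV v" and cw: "continuous_on UNIV w"
      using vH w(1) T by (auto intro: H10_continuous)
    then have "continuous_on UNIV (\<lambda>t. v t - w t)"
      by (intro continuous_intros)
    moreover have "(LINT t:{0..T}|lborel. (v t - w t)^2) < (- Bop v x)^2"
      using close set_integral_square_nonneg[of "{0..T}" g] unfolding h1_norm_sq_def by linarith
    ultimately have "- (- Bop v x) < Bop (\<lambda>t. v t - w t) x"
      using x A e by (intro Bop_gt_neg_if_L2_sq_less) auto
    moreover have "Bop (\<lambda>t. v t - w t) x = Bop v x - Bop w x"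
      using Bop_lincomb[OF cv cw, of "-1" x] by simp
    ultimately show False
      using w(2) by simp
  qed
  with vH show "v \<in> {v \<in> H10 T. \<forall>x\<in>A. 0 \<le> Bop v x}"
    by blast
qed

lemma Wset_perturbation_in_Vset:
  assumes T: "T \<ge> 0" and u: "u \<in> Kset T" and vu: "vu \<in> H10 T" "u = (\<lambda>x. 1 + vu x)"
    and v: "v \<in> Wset T u" and \<delta>: "\<delta> > 0"
  shows "(\<lambda>t. v t - \<delta> * vu t) \<in> Vset T u"
proof -
  define w where "w t = v t + (- \<delta>) * vu t" for t
  have vH: "v \<in> H10 T" using v unfolding Wset_def by simp
  then have wH: "w \<in> H10 T"
    unfolding w_def using vu(1) by (intro H10_lincomb)
  have cu: "continuous_on UNIV u" and cv: "continuous_on UNIV v"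
    and cvu: "continuous_on UNIV vu" and cw: "continuous_on UNIV w"
    using u vu vH wH T by (auto intro: H10_continuous Uset_continuous simp: Kset_def)
  have Bw: "Bop w x = Bop v x - \<delta> * Bop vu x" for x
    using Bop_lincomb[OF cv cvu, of "- \<delta>" x] unfolding w_def by simp
  have Bu: "Bop u x = 1 + Bop vu x" for x
    unfolding vu(2) by (rule Bop_one_plus[OF cvu])
  have "\<forall>\<^sub>F \<epsilon> in at_right 0. \<forall>x\<in>{0..T-1}. 0 \<le> Bop u x + \<epsilon> * Bop w x"
  proof (rule eventually_nonneg_perturbation)
    show "continuous_on {0..T-1} (Bop u)" "continuous_on {0..T-1} (Bop w)"
      using cu cw by (auto intro: Bop_continuous_on)
    show "\<forall>x\<in>{0..T-1}. 0 \<le> Bop u x"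
      using u(1) unfolding Kset_def by simp
    show "\<forall>x\<in>{0..T-1}. Bop u x = 0 \<longrightarrow> 0 < Bop w x"
    proof (intro ballI impI)
      fix x assume "x \<in> {0..T-1}" "Bop u x = 0"
      then have "0 \<le> Bop v x"
        using v unfolding Wset_def omega_c_def by auto
      moreover have "Bop vu x = -1"
        using Bu[of x] \<open>Bop u x = 0\<close> by simp
      ultimately show "0 < Bop w x"
        using Bw[of x] \<delta> by simp
    qed
  qed simp
  moreover have "Bop (\<lambda>t. u t + \<epsilon> * w t) x = Bop u x + \<epsilon> * Bop w x" for \<epsilon> x
    by (rule Bop_lincomb[OF cu cw])
  ultimately have "w \<in> Vset T u"
    by (intro Vset_memI[OF wH]) simp
  then show ?thesis unfolding w_def by simp
qed

lemma Wset_subset_H10_closure_Vset: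
  assumes T: "T \<ge> 0" and u: "u \<in> Kset T"
  shows "Wset T u \<subseteq> H10_closure T (Vset T u)"
proof
  obtain vu gu where vu: "vu \<in> H10 T" "u = (\<lambda>x. 1 + vu x)" and gu: "weak_deriv_L2 T vu gu"
    using u unfolding Kset_def Uset_def H10_def by auto
  define N where "N = h1_norm_sq T vu gu"
  fix v assume v: "v \<in> Wset T u"
  have "\<exists>w\<in>Vset T u. \<exists>g. weak_deriv_L2 T (\<lambda>t. v t - w t) g \<and>
          h1_norm_sq T (\<lambda>t. v t - w t) g < e^2" if e: "e > 0" for e
  proof -
    define \<delta> where "\<delta> = e / sqrt (N + 1)"
    have N: "N \<ge> 0" unfolding N_def by (rule h1_norm_sq_nonneg)
    have \<delta>: "\<delta> > 0" "\<delta>^2 = e^2 / (N + 1)"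
      using e N by (simp_all add: \<delta>_def power_divide)
    have diff: "(\<lambda>t. v t - (v t - \<delta> * vu t)) = (\<lambda>t. \<delta> * vu t)"
      by simp
    have "h1_norm_sq T (\<lambda>t. \<delta> * vu t) (\<lambda>t. \<delta> * gu t) = e^2 * N / (N + 1)"
      unfolding h1_norm_sq_scale \<delta>(2) N_def by simp
    also have "\<dots> < e^2"
      using e N by (simp add: field_simps)
    finally have "h1_norm_sq T (\<lambda>t. v t - (v t - \<delta> * vu t)) (\<lambda>t. \<delta> * gu t) < e^2"
      unfolding diff .
    moreover have "weak_deriv_L2 T (\<lambda>t. v t - (v t - \<delta> * vu t)) (\<lambda>t. \<delta> * gu t)"
      unfolding diff by (rule weak_deriv_L2_scale[OF gu])
    ultimately have "\<exists>g. weak_deriv_L2 T (\<lambda>t. v t - (v t - \<delta> * vu t)) g \<and>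
        h1_norm_sq T (\<lambda>t. v t - (v t - \<delta> * vu t)) g < e^2"
      by blast
    then show ?thesis
      using Wset_perturbation_in_Vset[OF T u vu v \<delta>(1)]
      by (rule bexI[where x="\<lambda>t. v t - \<delta> * vu t"])
  qed
  then show "v \<in> H10_closure T (Vset T u)"
    using v unfolding H10_closure_def Wset_def by blast
qed

theorem mainTheorem6:
  fixes T :: real and u :: "real \<Rightarrow> real"
  assumes "T > 1" and "u \<in> Kset T"
  shows "H10_closure T (Vset T u) = Wset T u"
proof
  have T: "T \<ge> 0" using assms(1) by simp
  have "H10_closure T (Vset T u) \<subseteq> H10_closure T (Wset T u)"
    using assms(2) unfolding Kset_def by (intro H10_closure_mono Vset_subset_Wset[OF T]) simp
  also have "\<dots> \<subseteq> Wset T u"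
    unfolding Wset_def by (rule H10_closure_Bop_nonneg[OF T]) (auto simp: omega_c_def)
  finally show "H10_closure T (Vset T u) \<subseteq> Wset T u" .
  show "Wset T u \<subseteq> H10_closure T (Vset T u)"
    using T assms(2) by (rule Wset_subset_H10_closure_Vset)
qed

end
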